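(* Let $(X,d_X)$ and $(\Lambda,d_\Lambda)$ be complete metric spaces and, for each $\lambda\in\Lambda$, let $S_\lambda(\cdot,\cdot)$ be a process on $X$. Suppose there exists a compact set $K\subseteq X$ such that (a) for every bounded $B\subseteq X$ and each $\lambda\in\Lambda$ there exists $t_{B,\lambda}$ such that $S_\lambda(t+s,s)B\subseteq K$ for all $t\ge t_{B,\lambda}$ and all $s\in\mathbb R$; and (b) for any $t>0$, the map $\lambda\mapsto S_\lambda(t+s,s)x$ is continuous on $\Lambda$, uniformly for $s\in\mathbb R$ and $x\in K$ (i.e. for each $\lambda_0\in\Lambda$, $t>0$, $\epsilon>0$ there is $\delta>0$ such that $d_\Lambda(\lambda,\lambda_0)<\delta$ implies $d_X(S_\lambda(t+s,s)x,S_{\lambda_0}(t+s,s)x)<\epsilon$ for all $s\in\mathbb R$, $x\in K$). Then the map $\lambda\mapsto\mathbb A_\lambda$, where $\mathbb A_\lambda$ is the uniform attractor of $S_\lambda$, is continuous with respect to the Hausdorff distance at every point of a residual subset of $\Lambda$.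
   Context: A process on a complete metric space $(X,d_X)$ is a two-parameter family of maps $S(t,s):X\to X$, $s\in\mathbb R$, $t\ge s$, with $S(t,t)=\mathrm{id}$, $S(t,\tau)S(\tau,s)=S(t,s)$ for $t\ge\tau\ge s$, and $S(t,s)x$ continuous in $(x,t,s)$. The Hausdorff semi-distance is $\rho_X(A,C)=\sup_{a\in A}\inf_{c\in C}d_X(a,c)$ and the Hausdorff distance is $\Delta_X(A,C)=\max(\rho_X(A,C),\rho_X(C,A))$. The uniform attractor of a process $S$ is the minimal compact set $\mathbb A\subseteq X$ such that $\lim_{t\to\infty}\sup_{s\in\mathbb R}\rho_X(S(t+s,s)B,\mathbb A)=0$ for every bounded $B\subseteq X$; under assumption (a) the uniform attractor $\mathbb A_\lambda$ of $S_\lambda$ exists for each $\lambda$. A subset of $\Lambda$ is residual if its complement is a countable union of nowhere dense sets. *)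

theory Defs
  imports "HOL-Analysis.Analysis"
begin

definition is_process :: "(real \<Rightarrow> real \<Rightarrow> 'x::metric_space \<Rightarrow> 'x) \<Rightarrow> bool" where
  "is_process S \<longleftrightarrow>
     (\<forall>t. S t t = id) \<and>
     (\<forall>t \<tau> s. s \<le> \<tau> \<and> \<tau> \<le> t \<longrightarrow> S t \<tau> \<circ> S \<tau> s = S t s) \<and>
     continuous_on {(x, t, s). s \<le> t} (\<lambda>(x, t, s). S t s x)"

text \<open>Hausdorff semi-distance and Hausdorff distance (intended for nonempty compact sets).\<close>
definition hsemidist :: "'x::metric_space set \<Rightarrow> 'x set \<Rightarrow> real" where
  "hsemidist A C = (SUP a\<in>A. infdist a C)"

definition hdist :: "'x::metric_space set \<Rightarrow> 'x set \<Rightarrow> real" where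
  "hdist A C = max (hsemidist A C) (hsemidist C A)"

definition uniformly_attracting :: "(real \<Rightarrow> real \<Rightarrow> 'x::metric_space \<Rightarrow> 'x) \<Rightarrow> 'x set \<Rightarrow> bool" where
  "uniformly_attracting S A \<longleftrightarrow>
     (\<forall>B. bounded B \<longrightarrow> (\<forall>e>0. \<exists>T. \<forall>t\<ge>T. \<forall>s. \<forall>y\<in>S (t + s) s ` B. \<exists>a\<in>A. dist y a < e))"

definition is_uniform_attractor :: "(real \<Rightarrow> real \<Rightarrow> 'x::metric_space \<Rightarrow> 'x) \<Rightarrow> 'x set \<Rightarrow> bool" where
  "is_uniform_attractor S A \<longleftrightarrow>
     compact A \<and> uniformly_attracting S A \<and>
     (\<forall>C. compact C \<and> uniformly_attracting S C \<longrightarrow> A \<subseteq> C)"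

definition nowhere_dense :: "'a::topological_space set \<Rightarrow> bool" where
  "nowhere_dense N \<longleftrightarrow> interior (closure N) = {}"

definition residual :: "'a::topological_space set \<Rightarrow> bool" where
  "residual R \<longleftrightarrow> (\<exists>F::nat \<Rightarrow> 'a set. (\<forall>n. nowhere_dense (F n)) \<and> - R = (\<Union>n. F n))"

end

theory Submission
  imports Defs
begin

text \<open>
  Let \<open>P\<^sub>n(\<lambda>)\<close> be the union over all initial times \<open>s\<close> of \<open>S\<^sub>\<lambda>(n+s,s)K\<close>. Every such set
  contains \<open>\<bbbA>\<^sub>\<lambda>\<close> in its closure (by minimality, since \<open>P\<^sub>n(\<lambda>) \<inter> K\<close> absorbs every bounded set),
  for \<open>n \<ge> 1\<close> it depends continuously on \<open>\<lambda>\<close> by (b), and it is attracted to \<open>\<bbbA>\<^sub>\<lambda>\<close> as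
  \<open>n \<rightarrow> \<infinity>\<close>. The closed sets of those \<open>\<lambda>\<close> for which all \<open>P\<^sub>n(\<lambda>)\<close>, \<open>n > N\<close>, are \<open>\<epsilon>\<close>-close to
  each other cover \<open>\<Lambda>\<close>, so by Baire the union of their interiors is dense. On such an interior
  \<open>\<bbbA>\<^sub>\<lambda>\<close> is close to \<open>P\<^sub>N\<^sub>+\<^sub>1(\<lambda>)\<close>, which moves continuously and stays close to some late
  \<open>P\<^sub>k(\<lambda>')\<close> and hence to \<open>\<bbbA>\<^sub>\<lambda>\<^sub>'\<close>. Thus the points where \<open>\<lambda> \<mapsto> \<bbbA>\<^sub>\<lambda>\<close> oscillates by less than
  \<open>\<eta>\<close> form a dense open set for each \<open>\<eta> > 0\<close>, and their intersection is the residual set.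
\<close>

lemma infdist_lessE:
  assumes "A \<noteq> {}" "infdist x A < e"
  obtains a where "a \<in> A" "dist x a < e"
proof -
  have "bdd_below (dist x ` A)" by (rule bdd_belowI[of _ 0]) auto
  then show thesis using assms that by (auto simp: infdist_notempty cINF_less_iff)
qed

lemma infdist_le_infdist_add:
  assumes "Y \<noteq> {}" and "\<And>y. y \<in> Y \<Longrightarrow> infdist y Z \<le> c"
  shows "infdist x Z \<le> infdist x Y + c"
proof -
  have "infdist x Z - c \<le> infdist x Y"
    unfolding infdist_notempty[OF assms(1)]
  proof (rule cINF_greatest[OF assms(1)])
    fix y assume "y \<in> Y"
    then show "infdist x Z - c \<le> dist x y"
      using infdist_triangle[of x Z y] assms(2)[of y] by linarith
  qed
  then show ?thesis by simp
qed

text \<open>Phrased with \<open>infdist\<close> rather than \<open>hdist\<close>: the sets need not be bounded, and then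
  \<open>hsemidist\<close> is a junk supremum.\<close>
definition hausdorff_continuous_at :: "('l::metric_space \<Rightarrow> 'x::metric_space set) \<Rightarrow> 'l \<Rightarrow> bool" where
  "hausdorff_continuous_at X l0 \<longleftrightarrow>
     (\<forall>\<epsilon>>0. \<exists>d>0. \<forall>l. dist l l0 < d \<longrightarrow>
        (\<forall>y\<in>X l. infdist y (X l0) \<le> \<epsilon>) \<and> (\<forall>y\<in>X l0. infdist y (X l) \<le> \<epsilon>))"

lemma closed_infdist_bounded:
  assumes X_ne: "\<And>l. X l \<noteq> {}" and Y_ne: "\<And>l. Y l \<noteq> {}"
    and X_cont: "\<And>l. hausdorff_continuous_at X l" and Y_cont: "\<And>l. hausdorff_continuous_at Y l"
  shows "closed {l. \<forall>y\<in>X l. infdist y (Y l) \<le> e}"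
  unfolding closed_def open_dist
proof (intro ballI)
  fix l assume "l \<in> - {l. \<forall>y\<in>X l. infdist y (Y l) \<le> e}"
  then obtain y where y: "y \<in> X l" and gap: "e < infdist y (Y l)" by (auto simp: not_le)
  define g where "g = infdist y (Y l) - e"
  have g: "g / 4 > 0" using gap by (simp add: g_def)
  obtain d1 where d1: "d1 > 0" "\<And>l'. dist l' l < d1 \<Longrightarrow> infdist y (X l') \<le> g / 4"
    using X_cont[of l] g y unfolding hausdorff_continuous_at_def by meson
  obtain d2 where d2: "d2 > 0" "\<And>l' z. dist l' l < d2 \<Longrightarrow> z \<in> Y l' \<Longrightarrow> infdist z (Y l) \<le> g / 4"
    using Y_cont[of l] g unfolding hausdorff_continuous_at_def by meson
  show "\<exists>d>0. \<forall>l'. dist l' l < d \<longrightarrow> l' \<in> - {l. \<forall>y\<in>X l. infdist y (Y l) \<le> e}"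
  proof (intro exI[of _ "min d1 d2"] conjI allI impI)
    show "min d1 d2 > 0" using d1 d2 by simp
    fix l' assume l': "dist l' l < min d1 d2"
    have "infdist y (X l') < g / 2" using d1(2) l' g by fastforce
    then obtain y' where y': "y' \<in> X l'" "dist y y' < g / 2"
      using infdist_lessE[OF X_ne] by blast
    have "infdist y (Y l) \<le> infdist y (Y l') + g / 4"
      by (rule infdist_le_infdist_add[OF Y_ne]) (use d2(2) l' in auto)
    moreover have "infdist y (Y l') \<le> infdist y' (Y l') + dist y y'"
      using infdist_triangle[of y "Y l'" y'] .
    ultimately have "e < infdist y' (Y l')" using y'(2) g g_def by linarith
    then show "l' \<in> - {l. \<forall>y\<in>X l. infdist y (Y l) \<le> e}" using y'(1) by force
  qed
qed

lemma dense_Union_interior_closed_cover: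
  fixes F :: "nat \<Rightarrow> 'a::complete_space set"
  assumes closed: "\<And>N. closed (F N)" and cover: "(\<Union>N. F N) = UNIV"
    and U: "open U" "U \<noteq> {}"
  shows "U \<inter> (\<Union>N. interior (F N)) \<noteq> {}"
proof
  assume disjoint: "U \<inter> (\<Union>N. interior (F N)) = {}"
  \<comment> \<open>the boundaries \<open>F N - interior (F N)\<close> are closed and nowhere dense, yet would cover \<open>U\<close>\<close>
  define T where "T N = F N - interior (F N)" for N
  have "interior (\<Union>(range T)) = {}"
  proof (rule Baire_category_alt[of euclidean, simplified])
    show "completely_metrizable_space (euclidean :: 'a topology) \<or>
        locally_compact_space (euclidean :: 'a topology) \<and> regular_space (euclidean :: 'a topology)"
      using completely_metrizable_space_euclidean by blast
    show "countable (range T)" by simp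
    fix B assume "B \<in> range T"
    then obtain N where B: "B = T N" by blast
    have "interior (T N) \<subseteq> interior (F N)" unfolding T_def by (rule interior_mono) blast
    then show "closed B \<and> interior B = {}"
      using closed[of N] interior_subset[of "T N"] unfolding B by (auto simp: T_def closed_Diff)
  qed
  moreover have "U \<subseteq> \<Union>(range T)"
  proof
    fix x assume "x \<in> U"
    moreover obtain N where "x \<in> F N" using cover by blast
    ultimately show "x \<in> \<Union>(range T)" using disjoint by (auto simp: T_def)
  qed
  ultimately show False
    using U interior_maximal by blast
qed

definition small_oscillation :: "('l::metric_space \<Rightarrow> 'x::metric_space set) \<Rightarrow> real \<Rightarrow> 'l set" where
  "small_oscillation A \<eta> =
     {l0. \<exists>d>0. \<forall>l l'. dist l l0 < d \<longrightarrow> dist l' l0 < d \<longrightarrow> (\<forall>a\<in>A l. infdist a (A l') \<le> \<eta>)}"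

lemma open_small_oscillation: "open (small_oscillation A \<eta>)"
  unfolding open_dist
proof (intro ballI)
  fix l0 assume "l0 \<in> small_oscillation A \<eta>"
  then obtain d where d: "d > 0" and osc: "\<And>l l'. dist l l0 < d \<Longrightarrow> dist l' l0 < d \<Longrightarrow>
      \<forall>a\<in>A l. infdist a (A l') \<le> \<eta>"
    unfolding small_oscillation_def by blast
  have "l1 \<in> small_oscillation A \<eta>" if "dist l1 l0 < d / 2" for l1
    unfolding small_oscillation_def
  proof (intro CollectI exI[of _ "d / 2"] conjI allI impI)
    fix l l' assume "dist l l1 < d / 2" "dist l' l1 < d / 2"
    then have "dist l l0 < d" "dist l' l0 < d"
      using that dist_triangle[of l l0 l1] dist_triangle[of l' l0 l1] by linarith+
    then show "\<forall>a\<in>A l. infdist a (A l') \<le> \<eta>" by (rule osc)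
  qed (use d in simp)
  then show "\<exists>e>0. \<forall>l1. dist l1 l0 < e \<longrightarrow> l1 \<in> small_oscillation A \<eta>"
    using d half_gt_zero by blast
qed

lemma small_oscillation_hdist_le:
  assumes "l0 \<in> small_oscillation A \<eta>" and nonempty: "\<And>l. A l \<noteq> {}"
  obtains d where "d > 0" "\<And>l. dist l l0 < d \<Longrightarrow> hdist (A l) (A l0) \<le> \<eta>"
proof -
  obtain d where d: "d > 0" and osc: "\<And>l l'. dist l l0 < d \<Longrightarrow> dist l' l0 < d \<Longrightarrow>
      \<forall>a\<in>A l. infdist a (A l') \<le> \<eta>"
    using assms(1) unfolding small_oscillation_def by blast
  have "hdist (A l) (A l0) \<le> \<eta>" if l: "dist l l0 < d" for l
    unfolding hdist_def hsemidist_def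
    using osc[OF l, of l0] osc[of l0 l] l d nonempty by (auto intro!: cSUP_least)
  with d that show thesis by blast
qed

lemma nowhere_dense_Compl_open_dense:
  assumes "open G" and dense: "\<And>U. open U \<Longrightarrow> U \<noteq> {} \<Longrightarrow> U \<inter> G \<noteq> {}"
  shows "nowhere_dense (- G)"
  unfolding nowhere_dense_def
  using dense[of "interior (- G)"] assms(1) interior_subset[of "- G"]
  by (auto simp: closed_open)

lemma residual_continuity_points:
  assumes nonempty: "\<And>l. A l \<noteq> {}"
    and dense: "\<And>\<eta> U. \<eta> > 0 \<Longrightarrow> open U \<Longrightarrow> U \<noteq> {} \<Longrightarrow> U \<inter> small_oscillation A \<eta> \<noteq> {}"
  shows "\<exists>R. residual R \<and> (\<forall>l0\<in>R. \<forall>e>0. \<exists>d>0. \<forall>l. dist l l0 < d \<longrightarrow> hdist (A l) (A l0) < e)"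
proof (intro exI conjI)
  let ?G = "\<lambda>m. small_oscillation A (inverse (real (Suc m)))"
  have "nowhere_dense (- ?G m)" for m
    by (rule nowhere_dense_Compl_open_dense[OF open_small_oscillation dense]) simp_all
  then show "residual (\<Inter>m. ?G m)"
    unfolding residual_def by (intro exI[of _ "\<lambda>m. - ?G m"]) auto
  show "\<forall>l0\<in>\<Inter>m. ?G m. \<forall>e>0. \<exists>d>0. \<forall>l. dist l l0 < d \<longrightarrow> hdist (A l) (A l0) < e"
  proof (intro ballI allI impI)
    fix l0 and e :: real assume l0: "l0 \<in> (\<Inter>m. ?G m)" and "e > 0"
    obtain m where m: "inverse (real (Suc m)) < e" using reals_Archimedean[OF \<open>e > 0\<close>] ..
    from l0 have "l0 \<in> ?G m" by simp
    then obtain d where "d > 0" "\<And>l. dist l l0 < d \<Longrightarrow> hdist (A l) (A l0) \<le> inverse (real (Suc m))"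
      using small_oscillation_hdist_le[of l0 A, OF _ nonempty] by blast
    with m show "\<exists>d>0. \<forall>l. dist l l0 < d \<longrightarrow> hdist (A l) (A l0) < e"
      by (meson le_less_trans)
  qed
qed

lemma process_cocycle:
  assumes "is_process S" "s \<le> \<tau>" "\<tau> \<le> t"
  shows "S t \<tau> (S \<tau> s x) = S t s x"
  using assms unfolding is_process_def by (metis comp_apply)

locale process_family =
  fixes S :: "'l::complete_space \<Rightarrow> real \<Rightarrow> real \<Rightarrow> 'x::complete_space \<Rightarrow> 'x"
    and K :: "'x set"
    and A :: "'l \<Rightarrow> 'x set"
  assumes proc: "\<And>l. is_process (S l)"
    and K_compact: "compact K"
    and absorb: "\<And>B l. bounded B \<Longrightarrow> \<exists>T. \<forall>t\<ge>T. \<forall>s. S l (t + s) s ` B \<subseteq> K"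
    and unif_cont: "\<And>l0 t e. t > 0 \<Longrightarrow> e > 0 \<Longrightarrow>
        \<exists>d>0. \<forall>l. dist l l0 < d \<longrightarrow>
          (\<forall>s. \<forall>x\<in>K. dist (S l (t + s) s x) (S l0 (t + s) s x) < e)"
    and attr: "\<And>l. is_uniform_attractor (S l) (A l)"
begin

definition evolved :: "nat \<Rightarrow> 'l \<Rightarrow> 'x set" where
  "evolved n l = (\<Union>s. S l (real n + s) s ` K)"

lemma attractor_attracting: "uniformly_attracting (S l) (A l)"
  using attr[of l] by (simp add: is_uniform_attractor_def)

lemma attractor_minimal: "compact C \<Longrightarrow> uniformly_attracting (S l) C \<Longrightarrow> A l \<subseteq> C"
  using attr[of l] by (simp add: is_uniform_attractor_def)

lemma K_nonempty: "K \<noteq> {}"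
proof -
  obtain T where "\<forall>t\<ge>T. \<forall>s. S undefined (t + s) s ` {undefined} \<subseteq> K"
    using absorb[of "{undefined}" undefined] by auto
  then show ?thesis by blast
qed

lemma evolved_nonempty: "evolved n l \<noteq> {}"
  using K_nonempty unfolding evolved_def by auto

lemma attractor_nonempty: "A l \<noteq> {}"
proof -
  obtain T where "\<forall>t\<ge>T. \<forall>s. \<forall>y\<in>S l (t + s) s ` {undefined}. \<exists>a\<in>A l. dist y a < 1"
    using attractor_attracting unfolding uniformly_attracting_def by (meson bounded_insert bounded_empty zero_less_one)
  then show ?thesis by blast
qed

lemma absorbed_into_evolved:
  assumes "bounded B"
  obtains T where "\<And>t s. t \<ge> T \<Longrightarrow> S l (t + s) s ` B \<subseteq> evolved n l \<inter> K"
proof -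
  obtain T where T: "\<And>t s. t \<ge> T \<Longrightarrow> S l (t + s) s ` B \<subseteq> K" using absorb[OF assms] by blast
  have "S l (t + s) s ` B \<subseteq> evolved n l \<inter> K" if t: "t \<ge> max T 0 + real n" for t s
  proof
    fix y assume "y \<in> S l (t + s) s ` B"
    then obtain b where b: "b \<in> B" and y: "y = S l (t + s) s b" by blast
    define \<tau> where "\<tau> = t + s - real n"
    \<comment> \<open>split the evolution at time \<open>\<tau>\<close>: the state at \<open>\<tau>\<close> already lies in \<open>K\<close>\<close>
    have "s \<le> \<tau>" "\<tau> \<le> t + s" "real n + \<tau> = t + s" "t - real n + s = \<tau>"
      using t by (auto simp: \<tau>_def)
    have "T \<le> t - real n" "T \<le> t" using t by (auto simp: max_def split: if_splits)
    have "S l \<tau> s b \<in> K" using T[OF \<open>T \<le> t - real n\<close>] b \<open>t - real n + s = \<tau>\<close> by blast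
    moreover have "y = S l (real n + \<tau>) \<tau> (S l \<tau> s b)"
      unfolding \<open>real n + \<tau> = t + s\<close> y using process_cocycle[OF proc \<open>s \<le> \<tau>\<close> \<open>\<tau> \<le> t + s\<close>] by simp
    ultimately have "y \<in> evolved n l" unfolding evolved_def by blast
    moreover have "y \<in> K" using T[OF \<open>T \<le> t\<close>] b y by blast
    ultimately show "y \<in> evolved n l \<inter> K" by blast
  qed
  then show thesis using that by blast
qed

lemma attractor_subset_closure_evolved: "A l \<subseteq> closure (evolved n l)"
proof -
  have "uniformly_attracting (S l) (closure (evolved n l) \<inter> K)"
    unfolding uniformly_attracting_def
  proof (intro allI impI)
    fix B :: "'x set" and e :: real assume "bounded B" "e > 0"
    obtain T where T: "\<And>t s. t \<ge> T \<Longrightarrow> S l (t + s) s ` B \<subseteq> evolved n l \<inter> K"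
      using absorbed_into_evolved[OF \<open>bounded B\<close>] by blast
    show "\<exists>T. \<forall>t\<ge>T. \<forall>s. \<forall>y\<in>S l (t + s) s ` B. \<exists>a\<in>closure (evolved n l) \<inter> K. dist y a < e"
    proof (intro exI[of _ T] allI impI ballI)
      fix t s y assume "T \<le> t" "y \<in> S l (t + s) s ` B"
      then have "y \<in> closure (evolved n l) \<inter> K" using T closure_subset by blast
      with \<open>e > 0\<close> show "\<exists>a\<in>closure (evolved n l) \<inter> K. dist y a < e" by force
    qed
  qed
  moreover have "compact (closure (evolved n l) \<inter> K)"
    using K_compact by (simp add: closed_Int_compact)
  ultimately have "A l \<subseteq> closure (evolved n l) \<inter> K"
    by (rule attractor_minimal[rotated])
  then show ?thesis by blast
qed

lemma evolved_attracted:
  assumes "\<eta> > 0"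
  obtains N where "\<And>n y. n \<ge> N \<Longrightarrow> y \<in> evolved n l \<Longrightarrow> infdist y (A l) \<le> \<eta>"
proof -
  obtain T where T: "\<forall>t\<ge>T. \<forall>s. \<forall>y\<in>S l (t + s) s ` K. \<exists>a\<in>A l. dist y a < \<eta>"
    using attractor_attracting K_compact assms unfolding uniformly_attracting_def by (meson compact_imp_bounded)
  obtain N :: nat where N: "T \<le> real N" using real_arch_simple by blast
  show thesis
  proof (rule that)
    fix n y assume "N \<le> n" "y \<in> evolved n l"
    then obtain s x where "x \<in> K" "y = S l (real n + s) s x" "T \<le> real n"
      using N unfolding evolved_def by (auto intro: order_trans)
    then obtain a where "a \<in> A l" "dist y a < \<eta>" using T by blast
    then show "infdist y (A l) \<le> \<eta>" by (simp add: infdist_le2)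
  qed
qed

lemma hausdorff_continuous_evolved:
  assumes "n \<noteq> 0"
  shows "hausdorff_continuous_at (evolved n) l0"
  unfolding hausdorff_continuous_at_def
proof (intro allI impI)
  fix \<epsilon> :: real assume "\<epsilon> > 0"
  then obtain d where "d > 0" and d: "\<And>l s x. dist l l0 < d \<Longrightarrow> x \<in> K \<Longrightarrow>
      dist (S l (real n + s) s x) (S l0 (real n + s) s x) < \<epsilon>"
    using unif_cont[of "real n" \<epsilon> l0] assms by auto
  have "(\<forall>y\<in>evolved n l. infdist y (evolved n l0) \<le> \<epsilon>) \<and> (\<forall>y\<in>evolved n l0. infdist y (evolved n l) \<le> \<epsilon>)"
    if l: "dist l l0 < d" for l
  proof (intro conjI ballI)
    fix y assume "y \<in> evolved n l"
    then obtain s x where x: "x \<in> K" and y: "y = S l (real n + s) s x" unfolding evolved_def by blast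
    have "S l0 (real n + s) s x \<in> evolved n l0" using x unfolding evolved_def by blast
    then show "infdist y (evolved n l0) \<le> \<epsilon>"
      using infdist_le2[OF _ less_imp_le[OF d[OF l x]]] y by blast
  next
    fix y assume "y \<in> evolved n l0"
    then obtain s x where x: "x \<in> K" and y: "y = S l0 (real n + s) s x" unfolding evolved_def by blast
    have "S l (real n + s) s x \<in> evolved n l" using x unfolding evolved_def by blast
    moreover have "dist y (S l (real n + s) s x) < \<epsilon>" using d[OF l x] y by (simp add: dist_commute)
    ultimately show "infdist y (evolved n l) \<le> \<epsilon>" by (meson infdist_le2 less_imp_le)
  qed
  with \<open>d > 0\<close> show "\<exists>d>0. \<forall>l. dist l l0 < d \<longrightarrow>
      (\<forall>y\<in>evolved n l. infdist y (evolved n l0) \<le> \<epsilon>) \<and> (\<forall>y\<in>evolved n l0. infdist y (evolved n l) \<le> \<epsilon>)"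
    by blast
qed

definition settled_after :: "nat \<Rightarrow> real \<Rightarrow> 'l set" where
  "settled_after N e = {l. \<forall>n\<ge>Suc N. \<forall>k\<ge>Suc N. \<forall>y\<in>evolved n l. infdist y (evolved k l) \<le> e}"

lemma closed_settled_after: "closed (settled_after N e)"
proof -
  have "settled_after N e =
      (\<Inter>n\<in>{Suc N..}. \<Inter>k\<in>{Suc N..}. {l. \<forall>y\<in>evolved n l. infdist y (evolved k l) \<le> e})"
    by (auto simp: settled_after_def)
  then show ?thesis
    by (simp only:) (intro closed_INT ballI closed_infdist_bounded evolved_nonempty
        hausdorff_continuous_evolved; simp)
qed

lemma settled_after_eventually:
  assumes "e > 0"
  obtains N where "l \<in> settled_after N e"
proof -
  obtain N where N: "\<And>n y. n \<ge> N \<Longrightarrow> y \<in> evolved n l \<Longrightarrow> infdist y (A l) \<le> e"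
    using evolved_attracted[OF assms] by blast
  have "infdist y (evolved k l) \<le> e" if "n \<ge> N" "y \<in> evolved n l" for n k y
  proof -
    have "infdist y (evolved k l) \<le> infdist y (A l) + 0"
      by (rule infdist_le_infdist_add[OF attractor_nonempty])
        (metis attractor_subset_closure_evolved evolved_nonempty in_closure_iff_infdist_zero order_refl subsetD)
    then show ?thesis using N[OF that] by linarith
  qed
  then have "l \<in> settled_after N e" unfolding settled_after_def using Suc_leD by blast
  then show thesis by (rule that)
qed

lemma small_oscillation_dense:
  assumes "\<eta> > 0" "open U" "U \<noteq> {}"
  shows "U \<inter> small_oscillation A \<eta> \<noteq> {}"
proof -
  define e where "e = \<eta> / 4"
  have e: "e > 0" using assms(1) by (simp add: e_def)
  have "(\<Union>N. settled_after N e) = UNIV"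
    using settled_after_eventually[OF e] by blast
  then have "U \<inter> (\<Union>N. interior (settled_after N e)) \<noteq> {}"
    by (rule dense_Union_interior_closed_cover[OF closed_settled_after _ assms(2,3)])
  then obtain N l2 where l2: "l2 \<in> U" "l2 \<in> interior (settled_after N e)"
    by blast
  then obtain \<rho> where \<rho>: "\<rho> > 0" "ball l2 \<rho> \<subseteq> settled_after N e"
    using mem_interior by blast
  let ?P = "evolved (Suc N)"
  have "hausdorff_continuous_at ?P l2" by (rule hausdorff_continuous_evolved) simp
  then obtain d where d: "d > 0" and near: "\<And>l. dist l l2 < d \<Longrightarrow>
      (\<forall>y\<in>?P l. infdist y (?P l2) \<le> e) \<and> (\<forall>y\<in>?P l2. infdist y (?P l) \<le> e)"
    using e unfolding hausdorff_continuous_at_def by meson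
  have "infdist a (A l') \<le> \<eta>"
    if l: "dist l l2 < min \<rho> d" and l': "dist l' l2 < min \<rho> d" and a: "a \<in> A l" for l l' a
  proof -
    obtain N' where N': "\<And>n y. n \<ge> N' \<Longrightarrow> y \<in> evolved n l' \<Longrightarrow> infdist y (A l') \<le> e"
      using evolved_attracted[OF e] by blast
    define k where "k = max N' (Suc N)"
    have "l' \<in> settled_after N e" using \<rho>(2) l' by (auto simp: dist_commute)
    \<comment> \<open>pass from \<open>a\<close> to \<open>A l'\<close> through \<open>P\<^sub>N\<^sub>+\<^sub>1(l)\<close>, \<open>P\<^sub>N\<^sub>+\<^sub>1(l2)\<close>, \<open>P\<^sub>N\<^sub>+\<^sub>1(l')\<close> and \<open>P\<^sub>k(l')\<close>\<close>
    have "infdist a (A l') \<le> infdist a (evolved k l') + e"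
      using N'[of k] by (intro infdist_le_infdist_add[OF evolved_nonempty]) (simp add: k_def)
    moreover have "infdist a (evolved k l') \<le> infdist a (?P l') + e"
      by (rule infdist_le_infdist_add[OF evolved_nonempty])
        (use \<open>l' \<in> settled_after N e\<close> in \<open>auto simp: settled_after_def k_def\<close>)
    moreover have "infdist a (?P l') \<le> infdist a (?P l2) + e"
      by (rule infdist_le_infdist_add[OF evolved_nonempty]) (use near l' in auto)
    moreover have "infdist a (?P l2) \<le> infdist a (?P l) + e"
      by (rule infdist_le_infdist_add[OF evolved_nonempty]) (use near l in auto)
    moreover have "infdist a (?P l) = 0"
      using attractor_subset_closure_evolved a in_closure_iff_infdist_zero[OF evolved_nonempty] by blast
    ultimately show ?thesis by (simp add: e_def)
  qed
  then have "l2 \<in> small_oscillation A \<eta>"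
    unfolding small_oscillation_def using \<rho>(1) d by (intro CollectI exI[of _ "min \<rho> d"]) auto
  then show ?thesis using l2(1) by blast
qed

end

theorem theorem4p1:
  fixes S :: "'l::complete_space \<Rightarrow> real \<Rightarrow> real \<Rightarrow> 'x::complete_space \<Rightarrow> 'x"
    and K :: "'x set"
    and A :: "'l \<Rightarrow> 'x set"
  assumes proc: "\<And>l. is_process (S l)"
    and K_compact: "compact K"
    and absorb: "\<And>B l. bounded B \<Longrightarrow> \<exists>T. \<forall>t\<ge>T. \<forall>s. S l (t + s) s ` B \<subseteq> K"
    and unif_cont: "\<And>l0 t e. t > 0 \<Longrightarrow> e > 0 \<Longrightarrow>
        \<exists>d>0. \<forall>l. dist l l0 < d \<longrightarrow>
          (\<forall>s. \<forall>x\<in>K. dist (S l (t + s) s x) (S l0 (t + s) s x) < e)"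
    and attr: "\<And>l. is_uniform_attractor (S l) (A l)"
  shows "\<exists>R. residual R \<and>
    (\<forall>l0\<in>R. \<forall>e>0. \<exists>d>0. \<forall>l. dist l l0 < d \<longrightarrow> hdist (A l) (A l0) < e)"
proof -
  interpret process_family S K A
    using assms by unfold_locales
  show ?thesis
    by (rule residual_continuity_points[OF attractor_nonempty small_oscillation_dense])
qed

end
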